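(* Let $L_m$ be as defined in the context. If $m\in\{6,8,10\}$, then $\lambda(L_m)>\sqrt{m-2}$. If $m\ge 12$ is even, then $\sqrt{m-2.5}<\lambda(L_m)<\sqrt{m-2}$. Moreover, $\lambda(L_6)\approx 2.1149$, $\lambda(L_8)\approx 2.4938$ and $\lambda(L_{10})\approx 2.8424$.
   Context: For even $m\ge 6$, $L_m$ is the graph obtained from $SK_{2,\frac{m-2}{2}}$ (the complete bipartite graph $K_{2,\frac{m-2}{2}}$ with one edge subdivided) by attaching a pendant edge to a vertex of maximum degree; equivalently, take a 5-cycle $u_1u_2u_3u_4u_5$, add $\frac{m-6}{2}$ new vertices each adjacent exactly to $u_1$ and $u_3$, and one new vertex adjacent only to $u_1$. It has $m$ edges. $\lambda(\cdot)$ denotes the largest adjacency eigenvalue; $\lambda(L_m)$ is the largest root of $x^6-mx^4+(\tfrac{5m}{2}-7)x^2+(4-m)x+2-\tfrac m2$. *)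

theory Defs
  imports "Jordan_Normal_Form.Matrix" "Jordan_Normal_Form.Char_Poly"
begin

(* Simple graphs on vertex set {0..<n} given by a symmetric irreflexive adjacency predicate. *)

definition adj_mat :: "nat \<Rightarrow> (nat \<Rightarrow> nat \<Rightarrow> bool) \<Rightarrow> real mat" where
  "adj_mat n E = mat n n (\<lambda>(i, j). if E i j then 1 else 0)"

definition lambda_max :: "nat \<Rightarrow> (nat \<Rightarrow> nat \<Rightarrow> bool) \<Rightarrow> real" where
  "lambda_max n E = Max {x. eigenvalue (adj_mat n E) x}"

(* L_m for even m \<ge> 6: vertices 0..4 form the 5-cycle u1..u5 (u_i = i-1),
   vertex 5 is the pendant vertex adjacent only to u1 = 0,
   vertices 6 .. 6 + (m-6)/2 - 1 are adjacent exactly to u1 = 0 and u3 = 2. *)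
definition L_nverts :: "nat \<Rightarrow> nat" where
  "L_nverts m = 6 + (m - 6) div 2"

definition L_edge0 :: "nat \<Rightarrow> nat \<Rightarrow> nat \<Rightarrow> bool" where
  "L_edge0 m i j =
     ((i < 5 \<and> j = (i + 1) mod 5)
      \<or> (i = 0 \<and> j = 5)
      \<or> ((i = 0 \<or> i = 2) \<and> 6 \<le> j \<and> j < L_nverts m))"

definition L_adj :: "nat \<Rightarrow> nat \<Rightarrow> nat \<Rightarrow> bool" where
  "L_adj m i j = (i < L_nverts m \<and> j < L_nverts m \<and> (L_edge0 m i j \<or> L_edge0 m j i))"

definition lambda_L :: "nat \<Rightarrow> real" where
  "lambda_L m = lambda_max (L_nverts m) (L_adj m)"

end

theory Submission
  imports Defs
begin

(* The (m - 6)/2 added vertices all have neighbourhood {u1, u3}, so for a nonzero eigenvalue k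
   an eigenvector is constant on them and the eigenvalue equation collapses to a 7 x 7 quotient
   system whose determinant is k P_m(k), P_m being the sextic of the statement. Hence every
   nonzero eigenvalue is a root of P_m, while the cofactors of that system give an eigenvector for
   every root r > 1. So lambda(L_m) lies strictly between lo >= 1 and hi as soon as P_m(lo) < 0
   and P_m > 0 on [hi, infinity). For m = 6, 8, 10 the latter is certified by a Taylor shift of
   P_m at hi with nonnegative coefficients. For m >= 12, with x = sqrt(m - 5/2) one has
   P_m(x) = (1 - x)(x^2 + 9x/4 + 3/4) < 0, and for x^2 >= m - 2 the value P_m(x) is a quartic
   that is positive for x >= 3.16 plus (x^2 - m + 2) times a nonnegative one. *)

lemma mult_adj_mat_nth:
  assumes "dim_vec v = n" "i < n"
  shows "(adj_mat n E *\<^sub>v v) $ i = (\<Sum>j | j < n \<and> E i j. v $ j)"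
proof -
  have "(adj_mat n E *\<^sub>v v) $ i = (\<Sum>j<n. (if E i j then 1 else 0) * v $ j)"
    using assms by (simp add: adj_mat_def scalar_prod_def atLeast0LessThan)
  also have "\<dots> = (\<Sum>j<n. if E i j then v $ j else 0)"
    by (rule sum.cong) auto
  also have "\<dots> = (\<Sum>j | j < n \<and> E i j. v $ j)"
    by (simp add: sum.If_cases lessThan_def Collect_conj_eq)
  finally show ?thesis .
qed

lemma dim_adj_mat:
  "dim_row (adj_mat n E) = n" "dim_col (adj_mat n E) = n"
  by (simp_all add: adj_mat_def)

lemma finite_eigenvalues:
  fixes A :: "'a :: field mat"
  assumes "A \<in> carrier_mat n n"
  shows "finite {k. eigenvalue A k}"
proof -
  have "char_poly A \<noteq> 0"
    using degree_monic_char_poly[OF assms] by auto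
  then show ?thesis
    using poly_roots_finite eigenvalue_root_char_poly[OF assms] by simp
qed

lemma lambda_max_strict_bounds:
  assumes "eigenvalue (adj_mat n E) r" "lo < r"
    and "\<And>k. eigenvalue (adj_mat n E) k \<Longrightarrow> lo < k \<Longrightarrow> k < hi"
  shows "lo < lambda_max n E \<and> lambda_max n E < hi"
proof -
  let ?S = "{k. eigenvalue (adj_mat n E) k}"
  have "finite ?S"
    by (rule finite_eigenvalues[of _ n]) (simp add: carrier_matI dim_adj_mat)
  moreover have "r \<in> ?S"
    using assms(1) by simp
  ultimately have "r \<le> Max ?S" "Max ?S \<in> ?S"
    by (rule Max_ge, intro Max_in) auto
  then show ?thesis
    using assms unfolding lambda_max_def by force
qed

lemma poly_pos_above_of_shift:
  fixes p :: "real poly"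
  assumes "h \<le> x" and shift: "\<forall>c \<in> set (coeffs (p \<circ>\<^sub>p [:h, 1:])). 0 \<le> c"
    and pos: "0 < poly p h"
  shows "0 < poly p x"
proof -
  define q where "q = p \<circ>\<^sub>p [:h, 1:]"
  have nonneg: "0 \<le> coeff q i" for i
    using shift forall_coeffs_conv[where P = "\<lambda>c. 0 \<le> c"] unfolding q_def by auto
  have "poly p h = coeff q 0 * (x - h) ^ 0"
    by (simp add: q_def poly_0_coeff_0 [symmetric] poly_pcompose)
  also have "\<dots> \<le> (\<Sum>i\<le>degree q. coeff q i * (x - h) ^ i)"
    using \<open>h \<le> x\<close> nonneg by (intro member_le_sum) auto
  also have "\<dots> = poly q (x - h)"
    by (simp add: poly_altdef)
  also have "\<dots> = poly p x"
    by (simp add: q_def poly_pcompose)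
  finally show ?thesis
    using pos by simp
qed

definition L_poly :: "real \<Rightarrow> real poly" where
  "L_poly m = [:2 - m/2, 4 - m, 5*m/2 - 7, 0, -m, 0, 1:]"

lemma poly_L_poly:
  "poly (L_poly m) x = x^6 - m*x^4 + (5*m/2 - 7)*x^2 + (4 - m)*x + 2 - m/2"
  by (simp add: L_poly_def algebra_simps eval_nat_numeral)

lemma L_nverts_ge_6: "6 \<le> L_nverts m"
  by (simp add: L_nverts_def)

lemma L_nverts_twin_count:
  assumes "even m" "6 \<le> m"
  shows "real m = 2 * real (L_nverts m - 6) + 6"
proof -
  have "m = 2 * (L_nverts m - 6) + 6"
    using assms unfolding L_nverts_def by presburger
  then show ?thesis
    by (metis of_nat_add of_nat_mult of_nat_numeral)
qed

lemma L_edge0_iff: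
  "L_edge0 m i j \<longleftrightarrow> (i, j) \<in> {(0, 1), (1, 2), (2, 3), (3, 4), (4, 0)}
    \<or> (i = 0 \<and> j = 5) \<or> ((i = 0 \<or> i = 2) \<and> 6 \<le> j \<and> j < L_nverts m)"
proof -
  have "(i < 5 \<and> j = (i + 1) mod 5) \<longleftrightarrow> (i, j) \<in> {(0, 1), (1, 2), (2, 3), (3, 4), (4, 0)}"
    by auto presburger+
  then show ?thesis
    unfolding L_edge0_def by simp
qed

lemma L_adj_neighbours:
  "{j. j < L_nverts m \<and> L_adj m 0 j} = {1, 4, 5} \<union> {6..<L_nverts m}"
  "{j. j < L_nverts m \<and> L_adj m 1 j} = {0, 2}"
  "{j. j < L_nverts m \<and> L_adj m 2 j} = {1, 3} \<union> {6..<L_nverts m}"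
  "{j. j < L_nverts m \<and> L_adj m 3 j} = {2, 4}"
  "{j. j < L_nverts m \<and> L_adj m 4 j} = {0, 3}"
  "{j. j < L_nverts m \<and> L_adj m 5 j} = {0}"
  "6 \<le> i \<Longrightarrow> i < L_nverts m \<Longrightarrow> {j. j < L_nverts m \<and> L_adj m i j} = {0, 2}"
  using L_nverts_ge_6[of m] by (auto simp: L_adj_def L_edge0_iff)

lemma L_eigen_equations_iff:
  fixes v :: "real vec"
  assumes "dim_vec v = L_nverts m"
  defines "S \<equiv> \<Sum>j\<in>{6..<L_nverts m}. v $ j"
  shows "adj_mat (L_nverts m) (L_adj m) *\<^sub>v v = k \<cdot>\<^sub>v v \<longleftrightarrow>
    k * v$0 = v$1 + v$4 + v$5 + S \<and> k * v$1 = v$0 + v$2 \<and> k * v$2 = v$1 + v$3 + S \<and>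
    k * v$3 = v$2 + v$4 \<and> k * v$4 = v$0 + v$3 \<and> k * v$5 = v$0 \<and>
    (\<forall>j\<in>{6..<L_nverts m}. k * v$j = v$0 + v$2)" (is "_ \<longleftrightarrow> ?eqs")
proof -
  let ?n = "L_nverts m" and ?A = "adj_mat (L_nverts m) (L_adj m)"
  have n: "6 \<le> ?n"
    by (rule L_nverts_ge_6)
  have row: "(?A *\<^sub>v v) $ i = (\<Sum>j | j < ?n \<and> L_adj m i j. v $ j)" if "i < ?n" for i
    using assms(1) that by (rule mult_adj_mat_nth)
  have rows: "(?A *\<^sub>v v) $ 0 = v$1 + v$4 + v$5 + S" "(?A *\<^sub>v v) $ 1 = v$0 + v$2"
    "(?A *\<^sub>v v) $ 2 = v$1 + v$3 + S" "(?A *\<^sub>v v) $ 3 = v$2 + v$4"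
    "(?A *\<^sub>v v) $ 4 = v$0 + v$3" "(?A *\<^sub>v v) $ 5 = v$0"
    "j \<in> {6..<?n} \<Longrightarrow> (?A *\<^sub>v v) $ j = v$0 + v$2" for j
    using n L_adj_neighbours(2)[of m, unfolded One_nat_def]
    by (simp_all add: row L_adj_neighbours S_def sum.union_disjoint)
  have indices: "{..<?n} = {0, 1, 2, 3, 4, 5} \<union> {6..<?n}"
    using n by auto
  have "?A *\<^sub>v v = k \<cdot>\<^sub>v v \<longleftrightarrow> (\<forall>i\<in>{..<?n}. (?A *\<^sub>v v) $ i = k * v $ i)"
    using assms(1) by (auto simp: vec_eq_iff dim_adj_mat)
  also have "\<dots> \<longleftrightarrow> (\<forall>i\<in>{0, 1, 2, 3, 4, 5}. (?A *\<^sub>v v) $ i = k * v $ i)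
      \<and> (\<forall>j\<in>{6..<?n}. (?A *\<^sub>v v) $ j = k * v $ j)"
    unfolding indices by blast
  also have "\<dots> \<longleftrightarrow> ?eqs"
    using rows by (simp add: eq_commute[of "k * _"])
  finally show ?thesis .
qed

lemma L_quotient_system_trivial:
  fixes k t a b c d e p S :: real
  assumes eqs: "k*a = b + e + p + S" "k*b = a + c" "k*c = b + d + S" "k*d = c + e"
      "k*e = d + a" "k*p = a" "k*S = t*(a + c)"
    and "k \<noteq> 0" "poly (L_poly (2*t + 6)) k \<noteq> 0"
  shows "a = 0 \<and> b = 0 \<and> c = 0 \<and> d = 0 \<and> e = 0 \<and> p = 0 \<and> S = 0"
proof -
  define D where "D = k^7 - 2*k^5*t - 6*k^5 + 5*k^3*t + 8*k^3 - 2*k^2*t - 2*k^2 - k*t - k"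
  have "D = k * poly (L_poly (2*t + 6)) k"
    unfolding D_def poly_L_poly by (simp add: eval_nat_numeral field_simps)
  then have "D \<noteq> 0"
    using assms by simp
  \<comment> \<open>The multipliers are cofactors of the quotient matrix of the system, whose determinant is D.\<close>
  have "D * a = (k^6 - k^4*t - 3*k^4 + k^2*t + k^2)*(k*a - (b + e + p + S))
      + (k^5 - 2*k^3 + k^2)*(k*b - (a + c)) + (k^4*t + k^4 + k^3 - k^2*t - k^2)*(k*c - (b + d + S))
      + (k^4 + k^3*t + k^3 - k^2*t - k^2)*(k*d - (c + e))
      + (k^5 - k^3*t - 2*k^3 + k^2*t + k^2)*(k*e - (d + a))
      + (k^5 - k^3*t - 3*k^3 + k*t + k)*(k*p - a) + (k^5 - 2*k^3 + k^2)*(k*S - t*(a + c))"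
    unfolding D_def by (simp add: eval_nat_numeral algebra_simps)
  also have "\<dots> = 0"
    using eqs by simp
  finally have "a = 0"
    using \<open>D \<noteq> 0\<close> by simp
  have "D * c = (k^4*t + k^4 + k^3 - k^2*t - k^2)*(k*a - (b + e + p + S))
      + (k^5 - 3*k^3 + k^2 + k)*(k*b - (a + c))
      + (k^6 - k^4*t - 4*k^4 + k^2*t + 2*k^2)*(k*c - (b + d + S))
      + (k^5 - k^3*t - 3*k^3 + k^2*t + k^2)*(k*d - (c + e))
      + (k^4 + k^3*t + k^3 - k^2*t - 2*k^2)*(k*e - (d + a))
      + (k^3*t + k^3 + k^2 - k*t - k)*(k*p - a) + (k^5 - 3*k^3 + k^2 + k)*(k*S - t*(a + c))"
    unfolding D_def by (simp add: eval_nat_numeral algebra_simps)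
  also have "\<dots> = 0"
    using eqs by simp
  finally have "c = 0"
    using \<open>D \<noteq> 0\<close> by simp
  show ?thesis
    using eqs \<open>a = 0\<close> \<open>c = 0\<close> \<open>k \<noteq> 0\<close> by auto
qed

lemma L_poly_root_if_eigenvalue:
  assumes m: "even m" "6 \<le> m"
    and "eigenvalue (adj_mat (L_nverts m) (L_adj m)) k" and "k \<noteq> 0"
  shows "poly (L_poly m) k = 0"
proof (rule ccontr)
  assume P: "poly (L_poly m) k \<noteq> 0"
  let ?n = "L_nverts m"
  define t where "t = real (?n - 6)"
  obtain v where v: "v \<in> carrier_vec ?n" "v \<noteq> 0\<^sub>v ?n" "adj_mat ?n (L_adj m) *\<^sub>v v = k \<cdot>\<^sub>v v"
    using assms(3) unfolding eigenvalue_def eigenvector_def by (auto simp: dim_adj_mat)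
  define S where "S = (\<Sum>j\<in>{6..<?n}. v $ j)"
  have "dim_vec v = ?n"
    using v(1) by simp
  from L_eigen_equations_iff[OF this, of k] v(3)
  have eqs: "k * v$0 = v$1 + v$4 + v$5 + S" "k * v$1 = v$0 + v$2" "k * v$2 = v$1 + v$3 + S"
      "k * v$3 = v$2 + v$4" "k * v$4 = v$3 + v$0" "k * v$5 = v$0"
      and twins: "\<forall>j\<in>{6..<?n}. k * v$j = v$0 + v$2"
    by (simp_all add: S_def add.commute)
  have twin: "v $ j = (v$0 + v$2) / k" if "j \<in> {6..<?n}" for j
    using twins that \<open>k \<noteq> 0\<close> by (simp add: field_simps)
  have "k * S = t * (v$0 + v$2)"
    using \<open>k \<noteq> 0\<close> by (simp add: S_def twin t_def)
  moreover have "poly (L_poly (2 * t + 6)) k \<noteq> 0"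
    using P L_nverts_twin_count[OF m] by (simp add: t_def)
  ultimately have zero: "v$0 = 0 \<and> v$1 = 0 \<and> v$2 = 0 \<and> v$3 = 0 \<and> v$4 = 0 \<and> v$5 = 0"
    using L_quotient_system_trivial[OF eqs] \<open>k \<noteq> 0\<close> by blast
  have "v = 0\<^sub>v ?n"
  proof (rule eq_vecI)
    fix i assume "i < dim_vec (0\<^sub>v ?n)"
    then show "v $ i = 0\<^sub>v ?n $ i"
      using zero twin[of i] by (cases "i < 6") (auto simp: numeral_eq_Suc less_Suc_eq)
  qed (use v(1) in simp)
  with v(2) show False ..
qed

lemma eigenvalue_L_if_root:
  assumes m: "even m" "6 \<le> m" and "1 < r" and root: "poly (L_poly m) r = 0"
  shows "eigenvalue (adj_mat (L_nverts m) (L_adj m)) r"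
proof -
  let ?n = "L_nverts m"
  define t where "t = real (?n - 6)"
  \<comment> \<open>Cofactors of the quotient system; they do not depend on m.\<close>
  define a b c d e p where "a = r^5 - 2*r^3 + r^2" and "b = 2*r^4 - 5*r^2 + 2*r + 1"
    and "c = r^5 - 3*r^3 + r^2 + r" and "d = r^4 + r^3 - 2*r^2" and "e = r^4 + r^3 - r^2 - r"
    and "p = r^4 - 2*r^2 + r"
  define v where "v = vec ?n (\<lambda>i. if i < 6 then [a, b, c, d, e, p] ! i else b)"
  have n: "6 \<le> ?n"
    by (rule L_nverts_ge_6)
  have dim: "dim_vec v = ?n" and carrier: "v \<in> carrier_vec ?n"
    by (simp_all add: v_def)
  have entries: "v$0 = a" "v$1 = b" "v$2 = c" "v$3 = d" "v$4 = e" "v$5 = p"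
      "j \<in> {6..<?n} \<Longrightarrow> v$j = b" for j
    using n by (simp_all add: v_def)
  have "poly (L_poly (2 * t + 6)) r = 0"
    using root L_nverts_twin_count[OF m] by (simp add: t_def)
  then have rows_0_2: "r * a = b + e + p + t * b" "r * c = b + d + t * b"
    unfolding poly_L_poly a_def b_def c_def d_def e_def p_def
    by (simp_all add: eval_nat_numeral field_simps)
  have rows_1_3_4_5: "r * b = a + c" "r * d = c + e" "r * e = a + d" "r * p = a"
    unfolding a_def b_def c_def d_def e_def p_def by (simp_all add: eval_nat_numeral algebra_simps)
  have twin_sum: "(\<Sum>j\<in>{6..<?n}. v $ j) = t * b"
    by (simp add: entries t_def)
  have "adj_mat ?n (L_adj m) *\<^sub>v v = r \<cdot>\<^sub>v v"
    unfolding L_eigen_equations_iff[OF dim] entries(1-6) twin_sum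
    by (simp add: rows_0_2 rows_1_3_4_5 entries(7))
  moreover have "0 < b"
  proof -
    have "b = (r - 1)^2 * (2*r^2 + 4*r + 1)"
      unfolding b_def by (simp add: eval_nat_numeral algebra_simps)
    moreover have "0 < (r - 1)^2"
      using \<open>1 < r\<close> by simp
    moreover have "0 < 2*r^2 + 4*r + 1"
      using \<open>1 < r\<close> zero_le_power2[of r] by linarith
    ultimately show ?thesis
      by simp
  qed
  then have "v \<noteq> 0\<^sub>v ?n"
    using entries(2) n by (auto dest: arg_cong[where f = "\<lambda>w. w $ 1"])
  ultimately show ?thesis
    using carrier unfolding eigenvalue_def eigenvector_def by (auto simp: dim_adj_mat)
qed

lemma lambda_L_strict_bounds:
  assumes m: "even m" "6 \<le> m" and "1 \<le> lo" "lo < hi"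
    and neg: "poly (L_poly m) lo < 0" and pos: "\<And>x. hi \<le> x \<Longrightarrow> 0 < poly (L_poly m) x"
  shows "lo < lambda_L m \<and> lambda_L m < hi"
proof -
  obtain r where r: "lo < r" "poly (L_poly m) r = 0"
    using poly_IVT_pos[OF \<open>lo < hi\<close> neg pos[OF order_refl]] by blast
  have "k < hi" if "eigenvalue (adj_mat (L_nverts m) (L_adj m)) k" "lo < k" for k
  proof -
    have "poly (L_poly m) k = 0"
      using L_poly_root_if_eigenvalue[OF m that(1)] that(2) \<open>1 \<le> lo\<close> by simp
    then show ?thesis
      using pos[of k] by (cases "hi \<le> k") auto
  qed
  moreover have "eigenvalue (adj_mat (L_nverts m) (L_adj m)) r"
    using eigenvalue_L_if_root[OF m _ r(2)] r(1) \<open>1 \<le> lo\<close> by simp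
  ultimately show ?thesis
    unfolding lambda_L_def using lambda_max_strict_bounds r(1) by blast
qed

lemma lambda_L_6_8_10:
  "2.1149 < lambda_L 6 \<and> lambda_L 6 < 2.115"
  "2.4938 < lambda_L 8 \<and> lambda_L 8 < 2.4939"
  "2.8424 < lambda_L 10 \<and> lambda_L 10 < 2.8425"
  by (rule lambda_L_strict_bounds; (erule poly_pos_above_of_shift)?;
      simp add: L_poly_def pcompose_pCons)+

lemma L_poly_neg_at_sqrt:
  assumes "7/2 < m"
  shows "poly (L_poly m) (sqrt (m - 2.5)) < 0"
proof -
  define x where "x = sqrt (m - 2.5)"
  have m_eq: "m = x\<^sup>2 + 5/2" and "1 < x"
    using assms by (simp_all add: x_def real_less_rsqrt)
  have "poly (L_poly m) x = (1 - x) * (x\<^sup>2 + 9/4 * x + 3/4)"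
    unfolding m_eq poly_L_poly by (simp add: eval_nat_numeral field_simps)
  also have "\<dots> < 0"
    using \<open>1 < x\<close> zero_le_power2[of x] by (intro mult_neg_pos) linarith+
  finally show ?thesis
    by (simp add: x_def)
qed

lemma L_poly_pos_above_sqrt:
  assumes "12 \<le> m" and "sqrt (m - 2) \<le> x"
  shows "0 < poly (L_poly m) x"
proof -
  define g where "g = [:1, 2, -5/2, -1, 1/2 :: real:]"
  define y where "y = x\<^sup>2 - (m - 2)"
  have "3.16 \<le> sqrt 10"
    by (rule real_le_rsqrt) (simp add: power2_eq_square)
  also have "\<dots> \<le> sqrt (m - 2)"
    using assms by simp
  also have "\<dots> \<le> x"
    by (fact assms(2))
  finally have "3.16 \<le> x" .
  have "0 \<le> y"
    using sqrt_le_D[OF assms(2)] by (simp add: y_def)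
  have "0 < poly g x"
    by (rule poly_pos_above_of_shift[OF \<open>3.16 \<le> x\<close>]) (simp_all add: g_def pcompose_pCons)
  moreover have "0 \<le> x^4 - 5/2 * x\<^sup>2 + x + 1/2"
  proof -
    have "9 \<le> x\<^sup>2"
      using \<open>3.16 \<le> x\<close> power_mono[of 3 x 2] by simp
    then have "9 * x\<^sup>2 \<le> x\<^sup>2 * x\<^sup>2"
      by (rule mult_right_mono) simp
    then have "9 * x\<^sup>2 \<le> x^4"
      by (simp add: eval_nat_numeral)
    moreover have "0 \<le> x"
      using \<open>3.16 \<le> x\<close> by simp
    ultimately show ?thesis
      using \<open>9 \<le> x\<^sup>2\<close> by linarith
  qed
  moreover have "poly (L_poly m) x = poly g x + y * (x^4 - 5/2 * x\<^sup>2 + x + 1/2)"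
    by (simp add: poly_L_poly g_def y_def eval_nat_numeral field_simps)
  ultimately show ?thesis
    using \<open>0 \<le> y\<close> by (simp add: add_pos_nonneg)
qed

lemma lambda_L_large:
  assumes "even m" "12 \<le> m"
  shows "sqrt (real m - 2.5) < lambda_L m \<and> lambda_L m < sqrt (real m - 2)"
proof (rule lambda_L_strict_bounds)
  show "1 \<le> sqrt (real m - 2.5)" "sqrt (real m - 2.5) < sqrt (real m - 2)"
    using assms by simp_all
  show "poly (L_poly (real m)) (sqrt (real m - 2.5)) < 0"
    using assms by (intro L_poly_neg_at_sqrt) simp
qed (use assms L_poly_pos_above_sqrt in auto)

theorem lemma2p1:
  shows "(\<forall>m::nat. m \<in> {6, 8, 10} \<longrightarrow> lambda_L m > sqrt (real m - 2))
       \<and> (\<forall>m::nat. even m \<and> m \<ge> 12 \<longrightarrow>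
            sqrt (real m - 2.5) < lambda_L m \<and> lambda_L m < sqrt (real m - 2))
       \<and> \<bar>lambda_L 6 - 2.1149\<bar> < 0.0001
       \<and> \<bar>lambda_L 8 - 2.4938\<bar> < 0.0001
       \<and> \<bar>lambda_L 10 - 2.8424\<bar> < 0.0001"
proof -
  have "sqrt (real 6 - 2) < 2.1149" "sqrt (real 8 - 2) < 2.4938" "sqrt (real 10 - 2) < 2.8424"
    by (intro real_less_lsqrt; simp add: power2_eq_square)+
  then have "\<forall>m::nat. m \<in> {6, 8, 10} \<longrightarrow> lambda_L m > sqrt (real m - 2)"
    using lambda_L_6_8_10 by (auto simp del: of_nat_numeral)
  moreover have "\<bar>lambda_L 6 - 2.1149\<bar> < 0.0001" "\<bar>lambda_L 8 - 2.4938\<bar> < 0.0001"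
      "\<bar>lambda_L 10 - 2.8424\<bar> < 0.0001"
    using lambda_L_6_8_10 by (simp_all add: abs_diff_less_iff)
  ultimately show ?thesis
    using lambda_L_large by blast
qed

end
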